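(* Let $\mathcal X$ be a countable space with the discrete metric and $\mathcal Y$ a Polish space. If a sequence $\{\mu_n\}_{n\in\mathbb N}$ of probability measures on $\mathcal X\times\mathcal Y$ converges setwise to a probability measure $\mu$ (i.e. $\mu_n(D)\to\mu(D)$ for every Borel $D\subset\mathcal X\times\mathcal Y$), then $\mu_n\to\mu$ in $\wp_I(\mathcal X\times\mathcal Y)$.
   Context: For a Polish space $\mathcal S$, $\wp(\mathcal S)$ denotes the Borel probability measures and $\wp_w(\mathcal S)$ this set with the weak-* topology (weakest topology making $\mu\mapsto\int g\,d\mu$ continuous for all bounded continuous $g$). For $\mu\in\wp(\mathcal X\times\mathcal Y)$, $\mu^{\mathcal X}$ is the marginal and $\mu(\cdot\mid x)$ a regular conditional distribution on $\mathcal Y$ given $x$. Let $\psi(\mu)\in\wp(\mathcal X\times\wp_w(\mathcal Y))$ be $\psi(\mu)(dx,d\zeta)=\delta_{\mu(\cdot\mid x)}(d\zeta)\mu^{\mathcal X}(dx)$. The topology of information on $\wp(\mathcal X\times\mathcal Y)$ is the coarsest topology making $\psi$ continuous into $\wp_w(\mathcal X\times\wp_w(\mathcal Y))$; $\wp_I(\mathcal X\times\mathcal Y)$ denotes $\wp(\mathcal X\times\mathcal Y)$ with it. Thus $\mu_n\to\mu$ in $\wp_I$ iff $\psi(\mu_n)\to\psi(\mu)$ weak-*. *)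

theory Defs
  imports "HOL-Probability.Probability"
begin

definition prob_measures :: "'b::topological_space measure set" where
  "prob_measures = {\<nu>. prob_space \<nu> \<and> sets \<nu> = sets borel}"

definition weak_top :: "'b::topological_space measure topology" where
  "weak_top = topology_generated_by
     {{\<nu> \<in> prob_measures. (\<integral>y. g y \<partial>\<nu>) \<in> U} | g U.
        continuous_on UNIV (g :: 'b \<Rightarrow> real) \<and> bounded (range g) \<and> open U}"

definition borel_of :: "'a topology \<Rightarrow> 'a measure" where
  "borel_of T = sigma (topspace T) {U. openin T U}"

definition info_space :: "('a \<times> 'b::topological_space measure) topology" where
  "info_space = prod_topology (discrete_topology UNIV) weak_top"

definition marginal :: "('a \<times> 'b) measure \<Rightarrow> 'a measure" where
  "marginal \<mu> = distr \<mu> (count_space UNIV) fst"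

definition is_rcd :: "('a \<times> 'b::topological_space) measure \<Rightarrow> ('a \<Rightarrow> 'b measure) \<Rightarrow> bool" where
  "is_rcd \<mu> \<kappa> \<longleftrightarrow> (\<forall>x. \<kappa> x \<in> prob_measures) \<and>
     (\<forall>A B. B \<in> sets borel \<longrightarrow>
        measure \<mu> (A \<times> B) = (\<integral>x. indicator A x * measure (\<kappa> x) B \<partial>marginal \<mu>))"

text \<open>psi(mu)(dx, dzeta) = delta_{kappa x}(dzeta) mu^X(dx), i.e. the push-forward of the
  marginal under x |-> (x, kappa x), as a Borel measure on X x P_w(Y).\<close>
definition psi :: "('a \<times> 'b::topological_space) measure \<Rightarrow> ('a \<Rightarrow> 'b measure)
                   \<Rightarrow> ('a \<times> 'b measure) measure" where
  "psi \<mu> \<kappa> = distr (marginal \<mu>) (borel_of info_space) (\<lambda>x. (x, \<kappa> x))"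

definition weak_conv_on :: "'a topology \<Rightarrow> (nat \<Rightarrow> 'a measure) \<Rightarrow> 'a measure \<Rightarrow> bool" where
  "weak_conv_on T Ps P \<longleftrightarrow>
     (\<forall>g. continuous_map T euclideanreal g \<and> bounded (g ` topspace T) \<longrightarrow>
        (\<lambda>n. \<integral>z. g z \<partial>Ps n) \<longlonglongrightarrow> (\<integral>z. g z \<partial>P))"

end

theory Submission
  imports Defs
begin

text \<open>Because \<open>\<X>\<close> is discrete, at every atom \<open>x\<close> with \<open>\<mu>\<^sup>\<X>{x} > 0\<close> the conditional
  distribution is \<open>\<mu>({x} \<times> \<cdot>) / \<mu>\<^sup>\<X>{x}\<close>, so setwise convergence of \<open>\<mu>\<^sub>n\<close> gives setwise, hence
  weak-*, convergence \<open>\<mu>\<^sub>n(\<cdot>|x) \<rightarrow> \<mu>(\<cdot>|x)\<close>. Integrating a bounded continuous \<open>g\<close> against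
  \<open>\<psi>(\<mu>\<^sub>n)\<close> means integrating \<open>x \<mapsto> g(x, \<mu>\<^sub>n(\<cdot>|x))\<close> against \<open>\<mu>\<^sub>n\<^sup>\<X>\<close>. On a finite set of atoms
  carrying almost all the mass of \<open>\<mu>\<^sup>\<X>\<close> these integrands converge pointwise, and setwise
  convergence of the marginals controls the remaining mass.\<close>

lemma LIMSEQ_by_approximation:
  fixes a :: "nat \<Rightarrow> real"
  assumes "\<And>e. e > 0 \<Longrightarrow> \<exists>s t. s \<longlonglongrightarrow> t \<and> (\<forall>\<^sub>F n in sequentially. \<bar>a n - s n\<bar> \<le> e) \<and> \<bar>l - t\<bar> \<le> e"
  shows "a \<longlonglongrightarrow> l"
proof (rule LIMSEQ_I)
  fix r :: real assume "r > 0"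
  then obtain s t where st: "s \<longlonglongrightarrow> t" "\<forall>\<^sub>F n in sequentially. \<bar>a n - s n\<bar> \<le> r / 4" "\<bar>l - t\<bar> \<le> r / 4"
    using assms[of "r / 4"] by auto
  have "\<forall>\<^sub>F n in sequentially. \<bar>s n - t\<bar> < r / 4"
    using tendstoD[OF st(1), of "r / 4"] \<open>r > 0\<close> by (simp add: dist_real_def)
  with st(2) have "\<forall>\<^sub>F n in sequentially. norm (a n - l) < r"
    by eventually_elim (use st(3) in \<open>unfold real_norm_def, linarith\<close>)
  then show "\<exists>no. \<forall>n\<ge>no. norm (a n - l) < r"
    by (simp add: eventually_sequentially)
qed

lemma limitin_topology_generated_by:
  assumes "l \<in> \<Union>S" "\<And>s. s \<in> S \<Longrightarrow> l \<in> s \<Longrightarrow> eventually (\<lambda>n. f n \<in> s) F"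
  shows "limitin (topology_generated_by S) f l F"
proof -
  have "eventually (\<lambda>n. f n \<in> V) F" if "generate_topology_on S V" "l \<in> V" for V
    using that
  proof (induction rule: generate_topology_on.induct)
    case (Int a b)
    then show ?case by (simp add: eventually_conj_iff)
  next
    case (UN K)
    then obtain k where "k \<in> K" "l \<in> k" by blast
    with UN.IH have "eventually (\<lambda>n. f n \<in> k) F" by blast
    then show ?case by (rule eventually_mono) (use \<open>k \<in> K\<close> in blast)
  qed (use assms(2) in auto)
  then show ?thesis
    using assms(1) by (auto simp: limitin_def openin_topology_generated_by_iff)
qed

subsection \<open>Setwise convergence and integrals\<close>

lemma tendsto_integral_setwise_simple:
  fixes f :: "'a \<Rightarrow> real"
  assumes fin: "\<And>n. finite_measure (\<nu>s n)" "finite_measure \<nu>"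
    and sets: "\<And>n. sets (\<nu>s n) = sets \<nu>"
    and conv: "\<And>A. A \<in> sets \<nu> \<Longrightarrow> (\<lambda>n. measure (\<nu>s n) A) \<longlonglongrightarrow> measure \<nu> A"
    and f: "simple_function \<nu> f"
  shows "(\<lambda>n. \<integral>y. f y \<partial>\<nu>s n) \<longlonglongrightarrow> (\<integral>y. f y \<partial>\<nu>)"
proof -
  have integral_eq: "(\<integral>y. f y \<partial>\<mu>) = (\<Sum>v\<in>f ` space \<nu>. measure \<mu> {x \<in> space \<nu>. f x = v} *\<^sub>R v)"
    if "finite_measure \<mu>" "sets \<mu> = sets \<nu>" for \<mu>
  proof -
    have space: "space \<mu> = space \<nu>"
      using that(2) by (rule sets_eq_imp_space_eq)
    have "simple_function \<mu> f"
      using simple_function_cong_algebra[OF that(2) space] f by blast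
    then have "Bochner_Integration.simple_bochner_integrable \<mu> f"
      using finite_measure.emeasure_finite[OF that(1)] by (intro Bochner_Integration.simple_bochner_integrable.intros) auto
    then have "(\<integral>y. f y \<partial>\<mu>) = Bochner_Integration.simple_bochner_integral \<mu> f"
      by (rule simple_bochner_integrable_eq_integral[symmetric])
    then show ?thesis
      unfolding Bochner_Integration.simple_bochner_integral_def space .
  qed
  have level_sets: "{x \<in> space \<nu>. f x = y} \<in> sets \<nu>" for y
    using simple_functionD(2)[OF f, of "{y}"] by (simp add: vimage_def Int_def conj_commute)
  have "(\<lambda>n. \<Sum>v\<in>f ` space \<nu>. measure (\<nu>s n) {x \<in> space \<nu>. f x = v} *\<^sub>R v)
      \<longlonglongrightarrow> (\<Sum>v\<in>f ` space \<nu>. measure \<nu> {x \<in> space \<nu>. f x = v} *\<^sub>R v)"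
    by (intro tendsto_sum tendsto_scaleR tendsto_const conv level_sets)
  then show ?thesis
    by (simp only: integral_eq[OF fin(1) sets] integral_eq[OF fin(2) refl])
qed

lemma bounded_borel_uniform_simple_approx:
  fixes f :: "'a \<Rightarrow> real"
  assumes f: "f \<in> borel_measurable M" and bound: "\<And>y. \<bar>f y\<bar> \<le> C" and e: "e > 0"
  obtains g where "simple_function M g" "\<And>y. \<bar>f y - g y\<bar> \<le> e"
proof -
  define g where "g y = of_int \<lfloor>f y / e\<rfloor> * e" for y
  have close: "\<bar>f y - g y\<bar> \<le> e" for y
  proof -
    have "of_int \<lfloor>f y / e\<rfloor> * e \<le> f y / e * e" "f y / e * e < (of_int \<lfloor>f y / e\<rfloor> + 1) * e"
      using e by (intro mult_right_mono mult_strict_right_mono; linarith)+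
    then show ?thesis
      using e by (simp add: g_def algebra_simps)
  qed
  define N where "N = \<lceil>C / e\<rceil>"
  have "\<lfloor>f y / e\<rfloor> \<in> {-N..N}" for y
  proof -
    have "- C / e \<le> f y / e" "f y / e \<le> C / e"
      using bound[of y] e by (intro divide_right_mono; simp add: abs_le_iff)+
    moreover have "C / e \<le> of_int N"
      unfolding N_def by (rule le_of_int_ceiling)
    ultimately show ?thesis
      by (simp add: floor_le_iff le_floor_iff)
  qed
  then have "g ` space M \<subseteq> (\<lambda>j. of_int j * e) ` {-N..N}"
    by (auto simp: g_def)
  moreover have "g \<in> borel_measurable M"
    unfolding g_def using f by measurable
  ultimately have "simple_function M g"
    by (intro simple_function_borel_measurable) (auto intro: finite_subset[OF _ finite_imageI])
  with close show ?thesis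
    using that by blast
qed

lemma abs_integral_le_integral:
  fixes f g :: "'a \<Rightarrow> real"
  assumes "integrable M f" "integrable M g" "\<And>x. x \<in> space M \<Longrightarrow> \<bar>f x\<bar> \<le> g x"
  shows "\<bar>\<integral>x. f x \<partial>M\<bar> \<le> (\<integral>x. g x \<partial>M)"
proof -
  have "f x \<le> g x" "- g x \<le> f x" if "x \<in> space M" for x
    using assms(3)[OF that] by linarith+
  then have "(\<integral>x. f x \<partial>M) \<le> (\<integral>x. g x \<partial>M)" "(\<integral>x. - g x \<partial>M) \<le> (\<integral>x. f x \<partial>M)"
    using assms(1,2) by (intro integral_mono; simp)+
  then show ?thesis
    by (simp add: abs_le_iff)
qed

lemma (in prob_space) abs_integral_diff_le:
  fixes f g :: "'a \<Rightarrow> real"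
  assumes "integrable M f" "integrable M g" "\<And>y. y \<in> space M \<Longrightarrow> \<bar>f y - g y\<bar> \<le> e"
  shows "\<bar>(\<integral>y. f y \<partial>M) - (\<integral>y. g y \<partial>M)\<bar> \<le> e"
proof -
  have "\<bar>\<integral>y. f y - g y \<partial>M\<bar> \<le> (\<integral>y. e \<partial>M)"
    using assms by (intro abs_integral_le_integral Bochner_Integration.integrable_diff) auto
  then show ?thesis
    using assms by (simp add: prob_space)
qed

lemma tendsto_integral_setwise:
  fixes f :: "'a \<Rightarrow> real"
  assumes prob: "\<And>n. prob_space (\<nu>s n)" "prob_space \<nu>"
    and sets: "\<And>n. sets (\<nu>s n) = sets \<nu>"
    and conv: "\<And>A. A \<in> sets \<nu> \<Longrightarrow> (\<lambda>n. measure (\<nu>s n) A) \<longlonglongrightarrow> measure \<nu> A"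
    and f: "f \<in> borel_measurable \<nu>" and bound: "\<And>y. \<bar>f y\<bar> \<le> C"
  shows "(\<lambda>n. \<integral>y. f y \<partial>\<nu>s n) \<longlonglongrightarrow> (\<integral>y. f y \<partial>\<nu>)"
proof (rule LIMSEQ_by_approximation)
  fix e :: real assume "e > 0"
  then obtain g where g: "simple_function \<nu> g" "\<And>y. \<bar>f y - g y\<bar> \<le> e"
    using bounded_borel_uniform_simple_approx[OF f bound] by blast
  have close: "\<bar>(\<integral>y. f y \<partial>\<mu>) - (\<integral>y. g y \<partial>\<mu>)\<bar> \<le> e"
    if "prob_space \<mu>" "sets \<mu> = sets \<nu>" for \<mu>
  proof -
    interpret prob_space \<mu> by fact
    have "f \<in> borel_measurable \<mu>" "g \<in> borel_measurable \<mu>"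
      using f borel_measurable_simple_function[OF g(1)] by (simp_all add: measurable_cong_sets[OF that(2) refl])
    moreover have "\<bar>f y\<bar> \<le> C + e" "\<bar>g y\<bar> \<le> C + e" for y
      using g(2)[of y] bound[of y] \<open>e > 0\<close> by linarith+
    ultimately have "integrable \<mu> f" "integrable \<mu> g"
      by (auto intro!: integrable_const_bound[where B = "C + e"])
    then show ?thesis
      using g(2) by (rule abs_integral_diff_le)
  qed
  have "(\<lambda>n. \<integral>y. g y \<partial>\<nu>s n) \<longlonglongrightarrow> (\<integral>y. g y \<partial>\<nu>)"
    using prob by (intro tendsto_integral_setwise_simple sets conv g(1) prob_space.finite_measure)
  moreover have "\<forall>\<^sub>F n in sequentially. \<bar>(\<integral>y. f y \<partial>\<nu>s n) - (\<integral>y. g y \<partial>\<nu>s n)\<bar> \<le> e"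
    using close[OF prob(1) sets] by (intro always_eventually allI)
  ultimately show "\<exists>s t. s \<longlonglongrightarrow> t \<and> (\<forall>\<^sub>F n in sequentially. \<bar>(\<integral>y. f y \<partial>\<nu>s n) - s n\<bar> \<le> e) \<and>
      \<bar>(\<integral>y. f y \<partial>\<nu>) - t\<bar> \<le> e"
    using close[OF prob(2) refl] by blast
qed

subsection \<open>The weak-* topology\<close>

lemma topspace_weak_top: "topspace (weak_top :: 'b::topological_space measure topology) = prob_measures"
proof -
  have "prob_measures \<in> {{\<nu> \<in> prob_measures. (\<integral>y. g y \<partial>\<nu>) \<in> U} | g U.
        continuous_on UNIV (g :: 'b \<Rightarrow> real) \<and> bounded (range g) \<and> open U}"
    by (intro CollectI exI[of _ "\<lambda>_. 0"] exI[of _ UNIV]) auto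
  then show ?thesis
    unfolding weak_top_def topology_generated_by_topspace by blast
qed

lemma limitin_weak_top_setwise:
  fixes \<nu>s :: "nat \<Rightarrow> 'b::topological_space measure"
  assumes prob: "\<And>n. \<nu>s n \<in> prob_measures" "\<nu> \<in> prob_measures"
    and conv: "\<And>B. B \<in> sets borel \<Longrightarrow> (\<lambda>n. measure (\<nu>s n) B) \<longlonglongrightarrow> measure \<nu> B"
  shows "limitin weak_top \<nu>s \<nu> sequentially"
proof -
  have measures: "prob_space (\<nu>s n)" "prob_space \<nu>" "sets (\<nu>s n) = sets \<nu>" "sets \<nu> = sets borel" for n
    using prob by (simp_all add: prob_measures_def)
  have integral_conv: "(\<lambda>n. \<integral>y. g y \<partial>\<nu>s n) \<longlonglongrightarrow> (\<integral>y. g y \<partial>\<nu>)"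
    if "continuous_on UNIV g" "bounded (range g)" for g :: "'b \<Rightarrow> real"
  proof -
    obtain C where "\<And>y. \<bar>g y\<bar> \<le> C"
      using \<open>bounded (range g)\<close> unfolding bounded_real by auto
    moreover have "g \<in> borel_measurable \<nu>"
      using borel_measurable_continuous_onI[OF that(1)] measurable_cong_sets[OF measures(4) refl] by blast
    ultimately show ?thesis
      using conv measures(1-3) by (intro tendsto_integral_setwise) (simp_all add: measures(4))
  qed
  let ?S = "{{\<nu> \<in> prob_measures. (\<integral>y. g y \<partial>\<nu>) \<in> U} | g U.
    continuous_on UNIV (g :: 'b \<Rightarrow> real) \<and> bounded (range g) \<and> open U}"
  show ?thesis
    unfolding weak_top_def
  proof (rule limitin_topology_generated_by)
    have "\<nu> \<in> topspace weak_top"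
      using prob(2) topspace_weak_top by blast
    then show "\<nu> \<in> \<Union> ?S"
      by (simp only: weak_top_def topology_generated_by_topspace)
  next
    fix s assume "s \<in> ?S" and "\<nu> \<in> s"
    from \<open>s \<in> ?S\<close> show "\<forall>\<^sub>F n in sequentially. \<nu>s n \<in> s"
    proof (elim CollectE exE conjE)
      fix g :: "'b \<Rightarrow> real" and U :: "real set"
      assume s: "s = {\<nu> \<in> prob_measures. (\<integral>y. g y \<partial>\<nu>) \<in> U}"
        and g: "continuous_on UNIV g" "bounded (range g)" and "open U"
      have "(\<integral>y. g y \<partial>\<nu>) \<in> U"
        using \<open>\<nu> \<in> s\<close> s by simp
      then have "\<forall>\<^sub>F n in sequentially. (\<integral>y. g y \<partial>\<nu>s n) \<in> U"
        by (rule topological_tendstoD[OF integral_conv[OF g] \<open>open U\<close>])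
      then show ?thesis
        by eventually_elim (simp add: s prob(1))
    qed
  qed
qed

subsection \<open>Countable discrete spaces\<close>

lemma countable_obtain_finite_measure_compl_less:
  fixes M :: "'a::countable measure"
  assumes "finite_measure M" and sets: "sets M = sets (count_space UNIV)" and "d > 0"
  obtains F where "finite F" "measure M (- F) < d"
proof -
  define A where "A N = - (from_nat ` {..<N} :: 'a set)" for N
  have "(\<lambda>N. measure M (A N)) \<longlonglongrightarrow> measure M (\<Inter>N. A N)"
    by (rule finite_measure.finite_Lim_measure_decseq) (auto simp: assms(1) sets A_def decseq_def)
  moreover have "x \<notin> A (Suc (to_nat x))" for x
    unfolding A_def by (auto intro!: image_eqI[of _ _ "to_nat x"])
  then have "(\<Inter>N. A N) = {}"
    by blast
  ultimately have "(\<lambda>N. measure M (A N)) \<longlonglongrightarrow> 0"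
    by simp
  then have "\<forall>\<^sub>F N in sequentially. measure M (A N) < d"
    using \<open>d > 0\<close> by (rule order_tendstoD)
  then obtain N where "measure M (A N) < d"
    unfolding eventually_sequentially by blast
  then show ?thesis
    using that[of "from_nat ` {..<N}"] by (simp add: A_def)
qed

lemma countable_abs_integral_diff_sum_le:
  fixes f :: "'a::countable \<Rightarrow> real"
  assumes "finite_measure M" and sets: "sets M = sets (count_space UNIV)"
    and bound: "\<And>x. \<bar>f x\<bar> \<le> C" and "finite F"
  shows "\<bar>(\<integral>x. f x \<partial>M) - (\<Sum>x\<in>F. f x * measure M {x})\<bar> \<le> C * measure M (- F)"
proof -
  interpret finite_measure M by fact
  have space: "space M = UNIV"
    using sets_eq_imp_space_eq[OF sets] by simp
  have "C \<ge> 0"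
    using bound abs_ge_zero order_trans by blast
  have integrable: "integrable M (\<lambda>x. f x * indicator A x)" for A
    using bound \<open>C \<ge> 0\<close> by (intro integrable_const_bound[where B = C])
      (auto simp: measurable_cong_sets[OF sets refl] indicator_def)
  have "(\<integral>x. f x \<partial>M) = (\<integral>x. f x * indicator F x + f x * indicator (- F) x \<partial>M)"
    by (rule Bochner_Integration.integral_cong) (auto simp: indicator_def)
  also have "\<dots> = (\<integral>x. f x * indicator F x \<partial>M) + (\<integral>x. f x * indicator (- F) x \<partial>M)"
    using integrable by simp
  also have "(\<integral>x. f x * indicator F x \<partial>M) = (\<Sum>x\<in>F. f x * measure M {x})"
    using \<open>finite F\<close> by (intro integral_indicator_finite_real) (simp_all add: sets less_top[symmetric])
  finally have split: "(\<integral>x. f x \<partial>M) - (\<Sum>x\<in>F. f x * measure M {x}) = (\<integral>x. f x * indicator (- F) x \<partial>M)"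
    by simp
  have "\<bar>\<integral>x. f x * indicator (- F) x \<partial>M\<bar> \<le> (\<integral>x. C * indicator (- F) x \<partial>M)"
    using bound by (intro abs_integral_le_integral integrable integrable_mult_right integrable_real_indicator)
      (auto simp: indicator_def sets less_top[symmetric])
  then show ?thesis
    by (simp add: split space)
qed

lemma tendsto_integral_countable:
  fixes Ms :: "nat \<Rightarrow> 'a::countable measure" and hs :: "nat \<Rightarrow> 'a \<Rightarrow> real"
  assumes prob: "\<And>n. prob_space (Ms n)" "prob_space M"
    and sets: "\<And>n. sets (Ms n) = sets (count_space UNIV)" "sets M = sets (count_space UNIV)"
    and conv: "\<And>A. (\<lambda>n. measure (Ms n) A) \<longlonglongrightarrow> measure M A"
    and bound: "\<And>n x. \<bar>hs n x\<bar> \<le> C" "\<And>x. \<bar>h x\<bar> \<le> C"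
    and pointwise: "\<And>x. measure M {x} > 0 \<Longrightarrow> (\<lambda>n. hs n x) \<longlonglongrightarrow> h x"
  shows "(\<lambda>n. \<integral>x. hs n x \<partial>Ms n) \<longlonglongrightarrow> (\<integral>x. h x \<partial>M)"
proof (rule LIMSEQ_by_approximation)
  fix e :: real assume "e > 0"
  have "C \<ge> 0"
    using bound(2) abs_ge_zero order_trans by blast
  define d where "d = e / (C + 1)"
  have "d > 0" "C * d \<le> e"
    using \<open>e > 0\<close> \<open>C \<ge> 0\<close> by (simp_all add: d_def field_simps)
  obtain F where F: "finite F" "measure M (- F) < d"
    using countable_obtain_finite_measure_compl_less[OF prob_space.finite_measure[OF prob(2)] sets(2) \<open>d > 0\<close>]
    by blast
  have tail: "C * measure \<mu> (- F) \<le> e" if "measure \<mu> (- F) < d" for \<mu>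
    using mult_left_mono[of "measure \<mu> (- F)" d C] that \<open>C \<ge> 0\<close> \<open>C * d \<le> e\<close> by simp
  have atom: "(\<lambda>n. hs n x * measure (Ms n) {x}) \<longlonglongrightarrow> h x * measure M {x}" for x
  proof (cases "measure M {x} > 0")
    case True
    then show ?thesis by (intro tendsto_mult pointwise conv)
  next
    case False
    then have null: "measure M {x} = 0"
      using measure_nonneg[of M "{x}"] by linarith
    have "(\<lambda>n. C * measure (Ms n) {x}) \<longlonglongrightarrow> 0"
      using tendsto_mult_left[OF conv[of "{x}"], of C] by (simp add: null)
    then have "(\<lambda>n. hs n x * measure (Ms n) {x}) \<longlonglongrightarrow> 0"
      by (rule Lim_null_comparison[rotated])
        (auto intro!: always_eventually mult_right_mono bound simp: abs_mult)
    then show ?thesis by (simp add: null)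
  qed
  have "\<forall>\<^sub>F n in sequentially. \<bar>(\<integral>x. hs n x \<partial>Ms n) - (\<Sum>x\<in>F. hs n x * measure (Ms n) {x})\<bar> \<le> e"
    using order_tendstoD(2)[OF conv F(2)]
  proof eventually_elim
    case (elim n)
    then show ?case
      using countable_abs_integral_diff_sum_le[where f = "hs n", OF prob_space.finite_measure[OF prob(1)] sets(1) bound(1) F(1)] tail
      by (meson order_trans)
  qed
  moreover have "\<bar>(\<integral>x. h x \<partial>M) - (\<Sum>x\<in>F. h x * measure M {x})\<bar> \<le> e"
    using countable_abs_integral_diff_sum_le[where f = h, OF prob_space.finite_measure[OF prob(2)] sets(2) bound(2) F(1)] tail[OF F(2)]
    by linarith
  moreover have "(\<lambda>n. \<Sum>x\<in>F. hs n x * measure (Ms n) {x}) \<longlonglongrightarrow> (\<Sum>x\<in>F. h x * measure M {x})"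
    by (intro tendsto_sum atom)
  ultimately show "\<exists>s t. s \<longlonglongrightarrow> t \<and> (\<forall>\<^sub>F n in sequentially. \<bar>(\<integral>x. hs n x \<partial>Ms n) - s n\<bar> \<le> e) \<and>
      \<bar>(\<integral>x. h x \<partial>M) - t\<bar> \<le> e"
    by blast
qed

subsection \<open>Marginals, conditional distributions and \<open>\<psi>\<close>\<close>

lemma borel_measurable_borel_of:
  assumes "continuous_map T euclideanreal g"
  shows "g \<in> borel_measurable (borel_of T)"
proof (rule borel_measurableI)
  fix S :: "real set" assume "open S"
  then have "openin T {x \<in> topspace T. g x \<in> S}"
    using assms by (intro openin_continuous_map_preimage) auto
  moreover have "{U. openin T U} \<subseteq> Pow (topspace T)"
    using openin_subset by blast
  ultimately show "g -` S \<inter> space (borel_of T) \<in> sets (borel_of T)"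
    unfolding borel_of_def by (auto simp: space_measure_of_conv sets_measure_of Int_def conj_commute intro: sigma_sets.Basic)
qed

lemma measurable_fst_count_space:
  fixes M :: "('a \<times> 'b::topological_space) measure"
  assumes "sets M = sets (count_space UNIV \<Otimes>\<^sub>M borel)"
  shows "fst \<in> measurable M (count_space UNIV)"
  unfolding measurable_cong_sets[OF assms refl] by (rule measurable_fst)

lemma sets_marginal: "sets (marginal M) = sets (count_space UNIV)"
  unfolding marginal_def by simp

lemma prob_space_marginal:
  fixes M :: "('a \<times> 'b::topological_space) measure"
  assumes "prob_space M" "sets M = sets (count_space UNIV \<Otimes>\<^sub>M borel)"
  shows "prob_space (marginal M)"
  unfolding marginal_def using assms by (intro prob_space.prob_space_distr measurable_fst_count_space)

lemma measure_marginal: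
  fixes M :: "('a \<times> 'b::topological_space) measure"
  assumes "sets M = sets (count_space UNIV \<Otimes>\<^sub>M borel)"
  shows "measure (marginal M) A = measure M (A \<times> UNIV)"
proof -
  have "space M = UNIV"
    using sets_eq_imp_space_eq[OF assms] by (simp add: space_pair_measure)
  then have "fst -` A \<inter> space M = A \<times> UNIV"
    by auto
  then show ?thesis
    unfolding marginal_def by (simp add: measure_distr measurable_fst_count_space[OF assms])
qed

lemma tendsto_measure_marginal:
  fixes \<mu>s :: "nat \<Rightarrow> ('a \<times> 'b::topological_space) measure"
  assumes sets: "\<And>n. sets (\<mu>s n) = sets (count_space UNIV \<Otimes>\<^sub>M borel)" "sets \<mu> = sets (count_space UNIV \<Otimes>\<^sub>M borel)"
    and conv: "\<And>D. D \<in> sets (count_space UNIV \<Otimes>\<^sub>M borel) \<Longrightarrow> (\<lambda>n. measure (\<mu>s n) D) \<longlonglongrightarrow> measure \<mu> D"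
  shows "(\<lambda>n. measure (marginal (\<mu>s n)) A) \<longlonglongrightarrow> measure (marginal \<mu>) A"
proof -
  have "A \<times> UNIV \<in> sets (count_space UNIV \<Otimes>\<^sub>M (borel :: 'b measure))"
    by (rule pair_measureI) auto
  then show ?thesis
    using conv by (simp add: measure_marginal sets)
qed

lemma is_rcd_prob_measures: "is_rcd \<mu> \<kappa> \<Longrightarrow> \<kappa> x \<in> prob_measures"
  unfolding is_rcd_def by blast

lemma measure_singleton_times_rcd:
  fixes \<mu> :: "('a \<times> 'b::topological_space) measure"
  assumes "is_rcd \<mu> \<kappa>" "B \<in> sets borel"
  shows "measure \<mu> ({x} \<times> B) = measure (marginal \<mu>) {x} * measure (\<kappa> x) B"
proof -
  have "measure \<mu> ({x} \<times> B) = (\<integral>x'. indicator {x} x' * measure (\<kappa> x') B \<partial>marginal \<mu>)"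
    using assms unfolding is_rcd_def by blast
  also have "\<dots> = (\<integral>x'. measure (\<kappa> x) B * indicator {x} x' \<partial>marginal \<mu>)"
    by (rule Bochner_Integration.integral_cong) (auto simp: indicator_def)
  also have "\<dots> = measure (\<kappa> x) B * measure (marginal \<mu>) {x}"
    by (simp add: marginal_def)
  finally show ?thesis
    by simp
qed

lemma tendsto_measure_rcd:
  fixes \<mu>s :: "nat \<Rightarrow> ('a \<times> 'b::topological_space) measure"
  assumes sets: "\<And>n. sets (\<mu>s n) = sets (count_space UNIV \<Otimes>\<^sub>M borel)" "sets \<mu> = sets (count_space UNIV \<Otimes>\<^sub>M borel)"
    and conv: "\<And>D. D \<in> sets (count_space UNIV \<Otimes>\<^sub>M borel) \<Longrightarrow> (\<lambda>n. measure (\<mu>s n) D) \<longlonglongrightarrow> measure \<mu> D"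
    and rcd: "\<And>n. is_rcd (\<mu>s n) (\<kappa>s n)" "is_rcd \<mu> \<kappa>"
    and atom: "measure (marginal \<mu>) {x} > 0" and B: "B \<in> sets borel"
  shows "(\<lambda>n. measure (\<kappa>s n x) B) \<longlonglongrightarrow> measure (\<kappa> x) B"
proof -
  note marginal_conv = tendsto_measure_marginal[OF sets conv]
  have "\<forall>\<^sub>F n in sequentially. measure (marginal (\<mu>s n)) {x} > 0"
    using order_tendstoD(1)[OF marginal_conv atom] .
  then have eventually_eq: "\<forall>\<^sub>F n in sequentially.
      measure (\<mu>s n) ({x} \<times> B) / measure (marginal (\<mu>s n)) {x} = measure (\<kappa>s n x) B"
    by eventually_elim (simp add: measure_singleton_times_rcd[OF rcd(1) B])
  have "{x} \<times> B \<in> sets (count_space UNIV \<Otimes>\<^sub>M (borel :: 'b measure))"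
    using B by (intro pair_measureI) auto
  then have "(\<lambda>n. measure (\<mu>s n) ({x} \<times> B) / measure (marginal (\<mu>s n)) {x})
      \<longlonglongrightarrow> measure \<mu> ({x} \<times> B) / measure (marginal \<mu>) {x}"
    using atom by (intro tendsto_divide conv marginal_conv) auto
  also have "measure \<mu> ({x} \<times> B) / measure (marginal \<mu>) {x} = measure (\<kappa> x) B"
    using atom by (simp add: measure_singleton_times_rcd[OF rcd(2) B])
  finally show ?thesis
    using eventually_eq by (rule Lim_transform_eventually)
qed

lemma limitin_weak_top_rcd:
  fixes \<mu>s :: "nat \<Rightarrow> ('a \<times> 'b::topological_space) measure"
  assumes sets: "\<And>n. sets (\<mu>s n) = sets (count_space UNIV \<Otimes>\<^sub>M borel)" "sets \<mu> = sets (count_space UNIV \<Otimes>\<^sub>M borel)"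
    and conv: "\<And>D. D \<in> sets (count_space UNIV \<Otimes>\<^sub>M borel) \<Longrightarrow> (\<lambda>n. measure (\<mu>s n) D) \<longlonglongrightarrow> measure \<mu> D"
    and rcd: "\<And>n. is_rcd (\<mu>s n) (\<kappa>s n)" "is_rcd \<mu> \<kappa>"
    and atom: "measure (marginal \<mu>) {x} > 0"
  shows "limitin weak_top (\<lambda>n. \<kappa>s n x) (\<kappa> x) sequentially"
  using is_rcd_prob_measures[OF rcd(1)] is_rcd_prob_measures[OF rcd(2)] tendsto_measure_rcd[OF sets conv rcd atom]
  by (rule limitin_weak_top_setwise)

lemma integral_psi:
  assumes "continuous_map info_space euclideanreal g" "\<And>x. \<kappa> x \<in> prob_measures"
  shows "(\<integral>z. g z \<partial>psi M \<kappa>) = (\<integral>x. g (x, \<kappa> x) \<partial>marginal M)"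
proof -
  have "topspace info_space = UNIV \<times> prob_measures"
    by (simp add: info_space_def topspace_weak_top)
  then have "(\<lambda>x. (x, \<kappa> x)) \<in> measurable (marginal M) (borel_of info_space)"
    using assms(2) by (auto simp: measurable_cong_sets[OF sets_marginal refl] borel_of_def space_measure_of_conv)
  then show ?thesis
    unfolding psi_def using borel_measurable_borel_of[OF assms(1)] by (rule integral_distr)
qed

theorem theorem4:
  fixes \<mu>s :: "nat \<Rightarrow> ('a::countable \<times> 'b::polish_space) measure"
    and \<mu> :: "('a \<times> 'b) measure"
    and \<kappa>s :: "nat \<Rightarrow> 'a \<Rightarrow> 'b measure"
    and \<kappa> :: "'a \<Rightarrow> 'b measure"
  assumes "\<And>n. prob_space (\<mu>s n)"
    and "\<And>n. sets (\<mu>s n) = sets (count_space UNIV \<Otimes>\<^sub>M borel)"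
    and "prob_space \<mu>"
    and "sets \<mu> = sets (count_space UNIV \<Otimes>\<^sub>M borel)"
    and "\<And>D. D \<in> sets (count_space UNIV \<Otimes>\<^sub>M borel) \<Longrightarrow>
           (\<lambda>n. measure (\<mu>s n) D) \<longlonglongrightarrow> measure \<mu> D"
    and "\<And>n. is_rcd (\<mu>s n) (\<kappa>s n)"
    and "is_rcd \<mu> \<kappa>"
  shows "weak_conv_on info_space (\<lambda>n. psi (\<mu>s n) (\<kappa>s n)) (psi \<mu> \<kappa>)"
  unfolding weak_conv_on_def
proof (intro allI impI, elim conjE)
  fix g :: "'a \<times> 'b measure \<Rightarrow> real"
  assume g: "continuous_map info_space euclideanreal g" "bounded (g ` topspace info_space)"
  have \<kappa>_prob: "\<kappa>s n x \<in> prob_measures" "\<kappa> x \<in> prob_measures" for n x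
    using is_rcd_prob_measures[OF assms(6)] is_rcd_prob_measures[OF assms(7)] by blast+
  obtain C where C: "\<And>x \<nu>. \<nu> \<in> prob_measures \<Longrightarrow> \<bar>g (x, \<nu>)\<bar> \<le> C"
    using g(2) by (auto simp: bounded_real info_space_def topspace_weak_top)
  have "(\<lambda>n. g (x, \<kappa>s n x)) \<longlonglongrightarrow> g (x, \<kappa> x)" if "measure (marginal \<mu>) {x} > 0" for x
  proof -
    have "limitin info_space (\<lambda>n. (x, \<kappa>s n x)) (x, \<kappa> x) sequentially"
      using limitin_weak_top_rcd[OF assms(2,4,5,6,7) that] by (simp add: info_space_def limitin_pairwise o_def)
    from continuous_map_limit[OF g(1) this] show ?thesis
      by (simp add: o_def)
  qed
  then have "(\<lambda>n. \<integral>x. g (x, \<kappa>s n x) \<partial>marginal (\<mu>s n)) \<longlonglongrightarrow> (\<integral>x. g (x, \<kappa> x) \<partial>marginal \<mu>)"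
    using assms(1-4) \<kappa>_prob C tendsto_measure_marginal[OF assms(2,4,5)]
    by (intro tendsto_integral_countable[where C = C] prob_space_marginal sets_marginal) auto
  then show "(\<lambda>n. \<integral>z. g z \<partial>psi (\<mu>s n) (\<kappa>s n)) \<longlonglongrightarrow> (\<integral>z. g z \<partial>psi \<mu> \<kappa>)"
    by (simp add: integral_psi[OF g(1)] \<kappa>_prob)
qed

end
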